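(* Let $N\ge1$, $a=(a_1,\dots,a_N)\in\mathbb{R}^N\setminus\{(0,\dots,0)\}$ and $H=(H_1,\dots,H_N)\in]0,1[^N$ be such that there exists $j\in\{1,\dots,N\}$ with $a_j\neq0$ and $H_j\neq1/2$. Then the mixed sub-fractional Brownian motion $(S^H_t(a))_{t\in\mathbb{R}_+}$ with parameters $N,a,H$ is not a Markov process.
   Context: Let $(\Omega,\mathcal F,\mathbb P)$ be a probability space. For $K\in]0,1[$, a fractional Brownian motion on $\mathbb{R}$ with Hurst index $K$ is a continuous centered Gaussian process $\{B^K(t),t\in\mathbb{R}\}$ with $\mathrm{Cov}(B^K(t),B^K(s))=\frac12(|t|^{2K}+|s|^{2K}-|t-s|^{2K})$. The sub-fractional Brownian motion (sfBm) of index $K$ is $\xi^K_t=(B^K_t+B^K_{-t})/\sqrt2$, $t\ge0$; it is a continuous centered Gaussian process with $\mathrm{Cov}(\xi^K_t,\xi^K_s)=s^{2K}+t^{2K}-\frac12\big((s+t)^{2K}+|t-s|^{2K}\big)$. For $N\ge1$, $H\in]0,1[^N$, $a\in\mathbb{R}^N\setminus\{0\}$, the mixed sub-fractional Brownian motion (msfBm) is $S^H_t(a)=\sum_{i=1}^N a_i\xi^{H_i}(t)$, $t\ge0$, where $\xi^{H_1},\dots,\xi^{H_N}$ are independent sfBms with indices $H_1,\dots,H_N$. *)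

theory Defs
  imports "HOL-Probability.Probability"
begin

definition centered_gaussian_process ::
  "'a measure \<Rightarrow> real set \<Rightarrow> (real \<Rightarrow> 'a \<Rightarrow> real) \<Rightarrow> (real \<Rightarrow> real \<Rightarrow> real) \<Rightarrow> bool" where
  "centered_gaussian_process M T X C \<longleftrightarrow>
     (\<forall>t\<in>T. X t \<in> borel_measurable M) \<and>
     (\<forall>(ts :: real list) (cs :: real list) (\<theta>::real).
        set ts \<subseteq> T \<longrightarrow> length cs = length ts \<longrightarrow>
        char (distr M borel (\<lambda>\<omega>. \<Sum>i<length ts. cs ! i * X (ts ! i) \<omega>)) \<theta>
        = complex_of_real (exp (- ((\<Sum>i<length ts. \<Sum>j<length ts.
              cs ! i * cs ! j * C (ts ! i) (ts ! j)) * \<theta>\<^sup>2) / 2)))"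

definition fbm_cov :: "real \<Rightarrow> real \<Rightarrow> real \<Rightarrow> real" where
  "fbm_cov K t s = (\<bar>t\<bar> powr (2*K) + \<bar>s\<bar> powr (2*K) - \<bar>t - s\<bar> powr (2*K)) / 2"

definition is_fbm :: "'a measure \<Rightarrow> real \<Rightarrow> (real \<Rightarrow> 'a \<Rightarrow> real) \<Rightarrow> bool" where
  "is_fbm M K B \<longleftrightarrow> centered_gaussian_process M UNIV B (fbm_cov K) \<and>
     (\<forall>\<omega>\<in>space M. continuous_on UNIV (\<lambda>t. B t \<omega>))"

text \<open>Sub-fractional Brownian motion built from a fBm B (used for t \<ge> 0).\<close>
definition sfbm :: "(real \<Rightarrow> 'a \<Rightarrow> real) \<Rightarrow> real \<Rightarrow> 'a \<Rightarrow> real" where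
  "sfbm B t \<omega> = (B t \<omega> + B (- t) \<omega>) / sqrt 2"

definition msfbm :: "nat \<Rightarrow> (nat \<Rightarrow> real) \<Rightarrow> (nat \<Rightarrow> real \<Rightarrow> 'a \<Rightarrow> real) \<Rightarrow> real \<Rightarrow> 'a \<Rightarrow> real" where
  "msfbm N a B t \<omega> = (\<Sum>i=1..N. a i * sfbm (B i) t \<omega>)"

definition natural_filtration :: "'a measure \<Rightarrow> real set \<Rightarrow> (real \<Rightarrow> 'a \<Rightarrow> real) \<Rightarrow> real \<Rightarrow> 'a measure" where
  "natural_filtration M T X s =
     sigma (space M) {X u -` A \<inter> space M | u A. u \<in> T \<and> u \<le> s \<and> A \<in> sets borel}"

definition gen_sigma :: "'a measure \<Rightarrow> ('a \<Rightarrow> real) \<Rightarrow> 'a measure" where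
  "gen_sigma M Y = sigma (space M) {Y -` A \<inter> space M | A. A \<in> sets borel}"

definition markov_process :: "'a measure \<Rightarrow> real set \<Rightarrow> (real \<Rightarrow> 'a \<Rightarrow> real) \<Rightarrow> bool" where
  "markov_process M T X \<longleftrightarrow>
     (\<forall>s\<in>T. \<forall>t\<in>T. \<forall>A\<in>sets (borel :: real measure). s \<le> t \<longrightarrow>
        (AE \<omega> in M. real_cond_exp M (natural_filtration M T X s) (\<lambda>\<omega>. indicator A (X t \<omega>)) \<omega>
                    = real_cond_exp M (gen_sigma M (X s)) (\<lambda>\<omega>. indicator A (X t \<omega>)) \<omega>))"

end

theory Submission
  imports Defs
begin

text \<open>The msfBm is a centered Gaussian process; write \<open>R\<close> for its covariance \<open>msfbm_cov N a H\<close>.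
  In a Markov centered Gaussian process, for \<open>r \<le> s \<le> t\<close> the residual \<open>X r - R r s / R s s * X s\<close>
  is uncorrelated with, hence independent of, \<open>X s\<close>; being measurable for the past at time \<open>s\<close>,
  it is then independent of \<open>X t\<close> too, which forces \<open>R t r * R s s = R r s * R t s\<close>.
  For the msfBm this identity fails: letting \<open>r \<rightarrow> 0\<close> gives \<open>R t s = R s s\<close> for \<open>s < t\<close>, letting
  then \<open>t \<rightarrow> \<infinity>\<close> gives \<open>R s s = (\<Sum>i. (a i)\<^sup>2 * s powr (2 * H i))\<close>, that is
  \<open>(\<Sum>i. (a i)\<^sup>2 * (1 - 2 powr (2 * H i) / 2) * s powr (2 * H i)) = 0\<close> for all \<open>s > 0\<close>.
  Since distinct powers of \<open>s\<close> are linearly independent, this is impossible as soon as some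
  \<open>a j \<noteq> 0\<close> has \<open>H j \<noteq> 1/2\<close>.\<close>

section \<open>Estimates for real powers\<close>

lemma powr_one_plus_taylor_bound:
  fixes e u :: real
  assumes e: "0 < e" "e < 2" and u: "\<bar>u\<bar> \<le> 1/2"
  shows "\<bar>(1 + u) powr e - 1 - e * u\<bar> \<le> 4 * u\<^sup>2"
proof (cases "u = 0")
  case True
  then show ?thesis by simp
next
  case False
  define f where "f m v = (if m = 0 then (1 + v) powr e
                           else if m = 1 then e * (1 + v) powr (e - 1)
                           else e * (e - 1) * (1 + v) powr (e - 2))" for m :: nat and v :: real
  have deriv: "DERIV (f m) v :> f (Suc m) v" if "m < 2" "-1/2 \<le> v" "v \<le> 1/2" for m v
  proof -
    have pos: "0 < 1 + v" using that by simp
    have "DERIV (\<lambda>v. (1 + v) powr e) v :> e * (1 + v) powr (e - 1)"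
      and "DERIV (\<lambda>v. e * (1 + v) powr (e - 1)) v :> e * ((e - 1) * (1 + v) powr (e - 2))"
      using pos by (auto intro!: derivative_eq_intros simp: algebra_simps)
    moreover have "f 0 = (\<lambda>v. (1 + v) powr e)" "f 1 = (\<lambda>v. e * (1 + v) powr (e - 1))"
      by (auto simp: f_def fun_eq_iff)
    ultimately show ?thesis
      using \<open>m < 2\<close> by (auto simp: f_def less_2_cases_iff algebra_simps)
  qed
  obtain v where v: "if u < 0 then u < v \<and> v < 0 else 0 < v \<and> v < u"
    and taylor: "(1 + u) powr e = (\<Sum>m<2. f m 0 / fact m * (u - 0) ^ m) + f 2 v / fact 2 * (u - 0) ^ 2"
    using Taylor[of 2 f "\<lambda>v. (1 + v) powr e" "-1/2" "1/2" 0 u] deriv u False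
    by (fastforce simp: f_def)
  have "\<bar>v\<bar> \<le> 1/2" using v u by (auto split: if_splits)
  have remainder: "(1 + u) powr e - 1 - e * u = e * (e - 1) * (1 + v) powr (e - 2) / 2 * u\<^sup>2"
    using taylor by (simp add: f_def numeral_2_eq_2)
  have "(1 + v) powr (e - 2) \<le> (1/2) powr (e - 2)"
    using \<open>\<bar>v\<bar> \<le> 1/2\<close> e by (intro powr_mono2') auto
  also have "\<dots> = 2 powr (2 - e)"
    by (simp add: powr_divide powr_minus_divide powr_diff)
  also have "\<dots> \<le> 2 powr 2"
    using e by (intro powr_mono) auto
  finally have "(1 + v) powr (e - 2) \<le> 4" by simp
  moreover have "\<bar>e * (e - 1)\<bar> \<le> 2"
  proof -
    have "0 \<le> (e - 1/2)\<^sup>2" "0 < (2 - e) * (e + 1)" using e by auto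
    then show ?thesis by (auto simp: abs_le_iff power2_eq_square algebra_simps)
  qed
  ultimately have "\<bar>e * (e - 1)\<bar> * (1 + v) powr (e - 2) / 2 * u\<^sup>2 \<le> 2 * 4 / 2 * u\<^sup>2"
    by (intro mult_right_mono divide_right_mono mult_mono) auto
  then show ?thesis
    unfolding remainder by (simp add: abs_mult)
qed

lemma powr_second_difference_bound:
  fixes e x r :: real
  assumes e: "0 < e" "e < 2" and x: "0 < x" and r: "0 \<le> r" "r \<le> x / 2"
  shows "\<bar>(x + r) powr e + (x - r) powr e - 2 * x powr e\<bar> \<le> 8 * r\<^sup>2 * x powr (e - 2)"
proof -
  define u where "u = r / x"
  have u: "\<bar>u\<bar> \<le> 1/2" "\<bar>-u\<bar> \<le> 1/2" using r x by (auto simp: u_def field_simps)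
  have "x + r = x * (1 + u)" "x - r = x * (1 + - u)" using x by (auto simp: u_def field_simps)
  then have "(x + r) powr e = x powr e * (1 + u) powr e" "(x - r) powr e = x powr e * (1 + - u) powr e"
    using x u by (simp_all add: powr_mult)
  then have "(x + r) powr e + (x - r) powr e - 2 * x powr e
      = x powr e * (((1 + u) powr e - 1 - e * u) + ((1 + - u) powr e - 1 - e * - u))"
    by (simp add: algebra_simps)
  also have "\<bar>\<dots>\<bar> \<le> x powr e * (4 * u\<^sup>2 + 4 * (- u)\<^sup>2)"
  proof -
    have "\<bar>((1 + u) powr e - 1 - e * u) + ((1 + - u) powr e - 1 - e * - u)\<bar> \<le> 4 * u\<^sup>2 + 4 * (- u)\<^sup>2"
      using powr_one_plus_taylor_bound[OF e u(1)] powr_one_plus_taylor_bound[OF e u(2)]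
      by (intro order.trans[OF abs_triangle_ineq] add_mono)
    then show ?thesis by (simp add: abs_mult mult_left_mono)
  qed
  also have "\<dots> = 8 * r\<^sup>2 * (x powr e / x\<^sup>2)"
    using x by (simp add: u_def field_simps power2_eq_square)
  also have "x powr e / x\<^sup>2 = x powr (e - 2)"
    using x by (simp add: powr_diff)
  finally show ?thesis .
qed

lemma eq_0_if_abs_le_powr_near_0:
  fixes c K \<alpha> \<delta> :: real
  assumes "0 < \<delta>" "0 < \<alpha>" and bound: "\<And>r. 0 < r \<Longrightarrow> r \<le> \<delta> \<Longrightarrow> \<bar>c\<bar> \<le> K * r powr \<alpha>"
  shows "c = 0"
proof -
  have "((\<lambda>r. K * r powr \<alpha>) \<longlongrightarrow> K * 0) (at_right 0)"
    by (intro tendsto_mult tendsto_const tendsto_zero_powrI[where b = \<alpha>])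
       (auto simp: assms eventually_at_right_field intro!: exI[of _ 1])
  moreover have "eventually (\<lambda>r. \<bar>c\<bar> \<le> K * r powr \<alpha>) (at_right 0)"
    unfolding eventually_at_right_field using assms by (intro exI[of _ \<delta>]) auto
  ultimately have "\<bar>c\<bar> \<le> K * 0"
    by (rule tendsto_lowerbound) simp
  then show ?thesis by simp
qed

lemma powr_combination_eq_0_imp_coeffs_eq_0:
  fixes d :: "real \<Rightarrow> real" and E :: "real set"
  assumes "finite E" and "\<And>s. 0 < s \<Longrightarrow> (\<Sum>x\<in>E. d x * s powr x) = 0"
  shows "\<forall>x\<in>E. d x = 0"
  using assms
proof (induction E rule: finite_linorder_min_induct)
  case empty
  then show ?case by simp
next
  case (insert b E)
  have "b \<notin> E" using insert.hyps(2) by auto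
  \<comment> \<open>Divide by the smallest power \<open>s powr b\<close> and let \<open>s\<close> tend to \<open>0\<close>.\<close>
  have sum_eq: "d b + (\<Sum>x\<in>E. d x * s powr (x - b)) = 0" if "0 < s" for s
  proof -
    have "(d b + (\<Sum>x\<in>E. d x * s powr (x - b))) * s powr b = (\<Sum>x\<in>insert b E. d x * s powr x)"
      using insert.hyps(1) \<open>b \<notin> E\<close> that
      by (simp add: algebra_simps sum_distrib_left sum_distrib_right powr_diff)
    with insert.prems[OF that] that show ?thesis by simp
  qed
  have "((\<lambda>s. d b + (\<Sum>x\<in>E. d x * s powr (x - b))) \<longlongrightarrow> d b + (\<Sum>x\<in>E. d x * 0)) (at_right 0)"
    using insert.hyps(2)
    by (intro tendsto_intros tendsto_zero_powrI[OF tendsto_ident_at])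
       (auto simp: eventually_at_right_field intro!: exI[of _ 1])
  moreover have "((\<lambda>s. d b + (\<Sum>x\<in>E. d x * s powr (x - b))) \<longlongrightarrow> 0) (at_right 0)"
    using sum_eq by (intro tendsto_eventually) (auto simp: eventually_at_right_field intro!: exI[of _ 1])
  ultimately have "d b = 0"
    using tendsto_unique[OF trivial_limit_at_right_real] by fastforce
  moreover have "\<forall>x\<in>E. d x = 0"
  proof (rule insert.IH)
    fix s :: real assume "0 < s"
    then show "(\<Sum>x\<in>E. d x * s powr x) = 0"
      using insert.prems[of s] insert.hyps(1) \<open>b \<notin> E\<close> \<open>d b = 0\<close> by simp
  qed
  ultimately show ?case by simp
qed

section \<open>The covariance of the mixed sub-fractional Brownian motion\<close>

definition sfbm_cov :: "real \<Rightarrow> real \<Rightarrow> real \<Rightarrow> real" where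
  "sfbm_cov K x y = (fbm_cov K x y + fbm_cov K x (- y) + fbm_cov K (- x) y + fbm_cov K (- x) (- y)) / 2"

definition msfbm_cov :: "nat \<Rightarrow> (nat \<Rightarrow> real) \<Rightarrow> (nat \<Rightarrow> real) \<Rightarrow> real \<Rightarrow> real \<Rightarrow> real" where
  "msfbm_cov N a H x y = (\<Sum>i=1..N. (a i)\<^sup>2 * sfbm_cov (H i) x y)"

lemma sfbm_cov_sym: "sfbm_cov K x y = sfbm_cov K y x"
  unfolding sfbm_cov_def fbm_cov_def by (simp add: abs_minus_commute algebra_simps)

lemma msfbm_cov_sym: "msfbm_cov N a H x y = msfbm_cov N a H y x"
  unfolding msfbm_cov_def by (simp add: sfbm_cov_sym)

lemma sfbm_cov_eq:
  assumes "0 \<le> x" "x \<le> y"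
  shows "sfbm_cov K x y = x powr (2*K) - ((y + x) powr (2*K) + (y - x) powr (2*K) - 2 * y powr (2*K)) / 2"
proof -
  have "\<bar>x - y\<bar> = y - x" "\<bar>x - - y\<bar> = y + x" "\<bar>- x - y\<bar> = y + x" "\<bar>- x - - y\<bar> = y - x"
    "\<bar>x\<bar> = x" "\<bar>y\<bar> = y" "\<bar>- x\<bar> = x" "\<bar>- y\<bar> = y"
    using assms by auto
  then show ?thesis unfolding sfbm_cov_def fbm_cov_def by (simp add: field_simps)
qed

lemma sfbm_cov_diag:
  assumes "0 \<le> s"
  shows "sfbm_cov K s s = (2 - 2 powr (2*K) / 2) * s powr (2*K)"
proof -
  have "(s + s) powr (2*K) = 2 powr (2*K) * s powr (2*K)"
    using assms by (simp add: powr_mult flip: mult_2)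
  then show ?thesis using sfbm_cov_eq[of s s K] assms by (simp add: field_simps)
qed

lemma sfbm_cov_diag_pos:
  assumes "K < 1" "0 < s"
  shows "0 < sfbm_cov K s s"
proof -
  have "(2::real) powr (2*K) < 2 powr 2" using assms by (intro powr_less_mono) auto
  then show ?thesis using assms by (simp add: sfbm_cov_diag)
qed

lemma sfbm_cov_approx:
  assumes "0 < K" "K < 1" "0 < y" "0 \<le> x" "x \<le> y / 2"
  shows "\<bar>sfbm_cov K x y - x powr (2*K)\<bar> \<le> 4 * x\<^sup>2 * y powr (2*K - 2)"
  using powr_second_difference_bound[of "2*K" y x] assms by (simp add: sfbm_cov_eq)

context
  fixes N :: nat and a H :: "nat \<Rightarrow> real"
  assumes Hurst: "\<forall>i\<in>{1..N}. 0 < H i \<and> H i < 1"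
begin

lemma msfbm_cov_approx:
  assumes "0 < y" "0 \<le> x" "x \<le> y / 2"
  shows "\<bar>msfbm_cov N a H x y - (\<Sum>i=1..N. (a i)\<^sup>2 * x powr (2 * H i))\<bar>
           \<le> 4 * x\<^sup>2 * (\<Sum>i=1..N. (a i)\<^sup>2 * y powr (2 * H i - 2))"
proof -
  have "\<bar>msfbm_cov N a H x y - (\<Sum>i=1..N. (a i)\<^sup>2 * x powr (2 * H i))\<bar>
      \<le> (\<Sum>i=1..N. (a i)\<^sup>2 * \<bar>sfbm_cov (H i) x y - x powr (2 * H i)\<bar>)"
    unfolding msfbm_cov_def sum_subtractf[symmetric]
    by (rule order.trans[OF sum_abs]) (simp add: abs_mult flip: right_diff_distrib)
  also have "\<dots> \<le> (\<Sum>i=1..N. (a i)\<^sup>2 * (4 * x\<^sup>2 * y powr (2 * H i - 2)))"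
    using Hurst assms by (intro sum_mono mult_left_mono sfbm_cov_approx) auto
  finally show ?thesis by (simp add: sum_distrib_left algebra_simps)
qed

lemma msfbm_cov_diag_pos:
  assumes "j \<in> {1..N}" "a j \<noteq> 0" "0 < s"
  shows "0 < msfbm_cov N a H s s"
  unfolding msfbm_cov_def
proof (rule sum_pos2[of _ j])
  show "0 < (a j)\<^sup>2 * sfbm_cov (H j) s s"
    using assms Hurst by (simp add: sfbm_cov_diag_pos)
  show "0 \<le> (a i)\<^sup>2 * sfbm_cov (H i) s s" if "i \<in> {1..N}" for i
    using that assms Hurst by (simp add: sfbm_cov_diag_pos less_imp_le)
qed (use assms in auto)

lemma msfbm_cov_row_const_if_triangle:
  assumes j: "j \<in> {1..N}" "a j \<noteq> 0"
    and triangle: "\<And>r s t. 0 < r \<Longrightarrow> r < s \<Longrightarrow> s < t \<Longrightarrow>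
      msfbm_cov N a H t r * msfbm_cov N a H s s = msfbm_cov N a H r s * msfbm_cov N a H t s"
    and st: "0 < s" "s < t"
  shows "msfbm_cov N a H t s = msfbm_cov N a H s s"
proof -
  define R where "R = msfbm_cov N a H"
  define P where "P x = (\<Sum>i=1..N. (a i)\<^sup>2 * x powr (2 * H i))" for x
  define G where "G y = (\<Sum>i=1..N. (a i)\<^sup>2 * y powr (2 * H i - 2))" for y
  define K where "K = 4 * (G s * \<bar>R t s\<bar> + G t * \<bar>R s s\<bar>) / (a j)\<^sup>2"
  \<comment> \<open>Let \<open>r \<rightarrow> 0\<close>: \<open>R r y = P r + O(r\<^sup>2)\<close>, while \<open>P r \<ge> (a j)\<^sup>2 * r powr (2 * H j)\<close> and \<open>2 * H j < 2\<close>.\<close>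
  have "R s s - R t s = 0"
  proof (rule eq_0_if_abs_le_powr_near_0[of "s / 2" "2 - 2 * H j" _ K])
    show "0 < 2 - 2 * H j" using Hurst j by auto
    fix r assume r: "0 < r" "r \<le> s / 2"
    let ?c = "R s s - R t s"
    have approx: "\<bar>R r t - P r\<bar> \<le> 4 * r\<^sup>2 * G t" "\<bar>R r s - P r\<bar> \<le> 4 * r\<^sup>2 * G s"
      using msfbm_cov_approx[of t r] msfbm_cov_approx[of s r] r st unfolding R_def P_def G_def by auto
    have "P r * ?c = (R r s - P r) * R t s - (R r t - P r) * R s s"
      using triangle[of r s t] r st msfbm_cov_sym[of N a H t r] by (simp add: R_def algebra_simps)
    then have "\<bar>P r\<bar> * \<bar>?c\<bar> \<le> \<bar>R r s - P r\<bar> * \<bar>R t s\<bar> + \<bar>R r t - P r\<bar> * \<bar>R s s\<bar>"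
      by (metis abs_mult abs_triangle_ineq4)
    also have "\<dots> \<le> 4 * r\<^sup>2 * G s * \<bar>R t s\<bar> + 4 * r\<^sup>2 * G t * \<bar>R s s\<bar>"
      using approx by (intro add_mono mult_right_mono) auto
    also have "\<dots> = (a j)\<^sup>2 * r powr (2 * H j) * (K * r powr (2 - 2 * H j))"
    proof -
      have "r powr (2 * H j) * r powr (2 - 2 * H j) = r\<^sup>2"
        using r by (simp add: powr_numeral flip: powr_add)
      then show ?thesis using j by (simp add: K_def field_simps)
    qed
    finally have bound: "\<bar>P r\<bar> * \<bar>?c\<bar> \<le> (a j)\<^sup>2 * r powr (2 * H j) * (K * r powr (2 - 2 * H j))" .
    have "(a j)\<^sup>2 * r powr (2 * H j) \<le> \<bar>P r\<bar>"
      unfolding P_def using j by (intro order.trans[OF member_le_sum abs_ge_self]) auto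
    then have "(a j)\<^sup>2 * r powr (2 * H j) * \<bar>?c\<bar> \<le> \<bar>P r\<bar> * \<bar>?c\<bar>"
      by (rule mult_right_mono) simp
    also note bound
    finally show "\<bar>?c\<bar> \<le> K * r powr (2 - 2 * H j)"
      by (rule mult_left_le_imp_le) (use j r in auto)
  qed (use st in auto)
  then show ?thesis by (simp add: R_def)
qed

lemma msfbm_cov_diag_if_triangle:
  assumes j: "j \<in> {1..N}" "a j \<noteq> 0"
    and triangle: "\<And>r s t. 0 < r \<Longrightarrow> r < s \<Longrightarrow> s < t \<Longrightarrow>
      msfbm_cov N a H t r * msfbm_cov N a H s s = msfbm_cov N a H r s * msfbm_cov N a H t s"
    and s: "0 < s"
  shows "msfbm_cov N a H s s = (\<Sum>i=1..N. (a i)\<^sup>2 * s powr (2 * H i))"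
proof -
  define G where "G y = (\<Sum>i=1..N. (a i)\<^sup>2 * y powr (2 * H i - 2))" for y
  have "(G \<longlongrightarrow> 0) at_top"
    unfolding G_def using Hurst
    by (intro tendsto_null_sum tendsto_mult_right_zero tendsto_neg_powr filterlim_ident) auto
  then have "((\<lambda>t. 4 * s\<^sup>2 * G t) \<longlongrightarrow> 4 * s\<^sup>2 * 0) at_top"
    by (intro tendsto_mult tendsto_const)
  moreover have "eventually (\<lambda>t. \<bar>msfbm_cov N a H s s - (\<Sum>i=1..N. (a i)\<^sup>2 * s powr (2 * H i))\<bar>
      \<le> 4 * s\<^sup>2 * G t) at_top"
    using eventually_ge_at_top[of "2 * s"]
  proof eventually_elim
    case (elim t)
    have "msfbm_cov N a H s s = msfbm_cov N a H s t"
      using msfbm_cov_row_const_if_triangle[OF j triangle, of s t] msfbm_cov_sym[of N a H t s] s elim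
      by auto
    then show ?case
      using msfbm_cov_approx[of t s] s elim by (simp add: G_def)
  qed
  ultimately have "\<bar>msfbm_cov N a H s s - (\<Sum>i=1..N. (a i)\<^sup>2 * s powr (2 * H i))\<bar> \<le> 4 * s\<^sup>2 * 0"
    by (rule tendsto_lowerbound) simp
  then show ?thesis by simp
qed

lemma msfbm_cov_not_triangle:
  assumes "\<exists>j\<in>{1..N}. a j \<noteq> 0 \<and> H j \<noteq> 1/2"
  shows "\<exists>r s t. 0 < r \<and> r < s \<and> s < t \<and> msfbm_cov N a H s s \<noteq> 0 \<and>
           msfbm_cov N a H t r * msfbm_cov N a H s s \<noteq> msfbm_cov N a H r s * msfbm_cov N a H t s"
proof (rule ccontr)
  assume contra: "\<not> ?thesis"
  obtain j where j: "j \<in> {1..N}" "a j \<noteq> 0" "H j \<noteq> 1/2" using assms by blast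
  have triangle: "msfbm_cov N a H t r * msfbm_cov N a H s s = msfbm_cov N a H r s * msfbm_cov N a H t s"
    if "0 < r" "r < s" "s < t" for r s t
  proof -
    have "msfbm_cov N a H s s \<noteq> 0" using msfbm_cov_diag_pos[OF j(1,2), of s] that by simp
    then show ?thesis using contra[unfolded not_ex, rule_format, of r s t] that by simp
  qed
  define coef where "coef i = (a i)\<^sup>2 * (1 - 2 powr (2 * H i) / 2)" for i
  define d where "d x = (\<Sum>i | i \<in> {1..N} \<and> 2 * H i = x. coef i)" for x
  have "(\<Sum>x\<in>(\<lambda>i. 2 * H i) ` {1..N}. d x * s powr x) = 0" if "0 < s" for s
  proof -
    have "(\<Sum>x\<in>(\<lambda>i. 2 * H i) ` {1..N}. d x * s powr x) = (\<Sum>i=1..N. coef i * s powr (2 * H i))"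
      unfolding d_def sum_distrib_right
      by (subst sum.image_gen[of "{1..N}" _ "\<lambda>i. 2 * H i"]) (auto intro!: sum.cong)
    also have "\<dots> = msfbm_cov N a H s s - (\<Sum>i=1..N. (a i)\<^sup>2 * s powr (2 * H i))"
      unfolding msfbm_cov_def coef_def using that
      by (simp add: sfbm_cov_diag algebra_simps flip: sum_subtractf)
    also have "\<dots> = 0"
      using msfbm_cov_diag_if_triangle[OF j(1,2) triangle that] by simp
    finally show ?thesis .
  qed
  then have "d (2 * H j) = 0"
    using powr_combination_eq_0_imp_coeffs_eq_0[of "(\<lambda>i. 2 * H i) ` {1..N}" d] j(1) by auto
  moreover have "d (2 * H j) = (1 - 2 powr (2 * H j) / 2) * (\<Sum>i | i \<in> {1..N} \<and> H i = H j. (a i)\<^sup>2)"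
    unfolding d_def coef_def sum_distrib_left by (intro sum.cong) auto
  moreover have "0 < (\<Sum>i | i \<in> {1..N} \<and> H i = H j. (a i)\<^sup>2)"
    using j by (intro sum_pos2[of _ j]) auto
  moreover have "2 powr (2 * H j) \<noteq> (2::real) powr 1"
    using j(3) by (subst powr_inj) auto
  ultimately show False by simp
qed

end

section \<open>The mixed sub-fractional Brownian motion is Gaussian\<close>

lemma sum_lessThan_add:
  fixes f :: "nat \<Rightarrow> 'b::comm_monoid_add"
  shows "(\<Sum>k<m + n. f k) = (\<Sum>k<m. f k) + (\<Sum>k<n. f (m + k))"
  by (induction n) (simp_all add: add_ac)

lemma centered_gaussian_process_measurable:
  "centered_gaussian_process M T X C \<Longrightarrow> t \<in> T \<Longrightarrow> X t \<in> borel_measurable M"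
  unfolding centered_gaussian_process_def by blast

lemma centered_gaussian_process_char:
  assumes "centered_gaussian_process M T X C" "set ts \<subseteq> T" "length cs = length ts"
  shows "char (distr M borel (\<lambda>\<omega>. \<Sum>i<length ts. cs ! i * X (ts ! i) \<omega>)) \<theta>
        = complex_of_real (exp (- ((\<Sum>i<length ts. \<Sum>j<length ts. cs ! i * cs ! j * C (ts ! i) (ts ! j))
            * \<theta>\<^sup>2) / 2))"
  using assms unfolding centered_gaussian_process_def by auto

lemma centered_gaussian_process_scale:
  assumes "centered_gaussian_process M T X C"
  shows "centered_gaussian_process M T (\<lambda>t \<omega>. c * X t \<omega>) (\<lambda>x y. c\<^sup>2 * C x y)"
  unfolding centered_gaussian_process_def
proof (intro conjI ballI allI impI)
  show "(\<lambda>\<omega>. c * X t \<omega>) \<in> borel_measurable M" if "t \<in> T" for t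
    using centered_gaussian_process_measurable[OF assms that] by measurable
  fix ts cs :: "real list" and \<theta> :: real
  assume ts: "set ts \<subseteq> T" and len: "length cs = length ts"
  have "(\<Sum>i<length ts. map ((*) c) cs ! i * X (ts ! i) \<omega>) = (\<Sum>i<length ts. cs ! i * (c * X (ts ! i) \<omega>))" for \<omega>
    using len by (intro sum.cong) auto
  moreover have "(\<Sum>i<length ts. \<Sum>j<length ts. map ((*) c) cs ! i * map ((*) c) cs ! j * C (ts ! i) (ts ! j))
      = (\<Sum>i<length ts. \<Sum>j<length ts. cs ! i * cs ! j * (c\<^sup>2 * C (ts ! i) (ts ! j)))"
    using len by (intro sum.cong) (auto simp: power2_eq_square)
  ultimately show "char (distr M borel (\<lambda>\<omega>. \<Sum>i<length ts. cs ! i * (c * X (ts ! i) \<omega>))) \<theta>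
      = complex_of_real (exp (- ((\<Sum>i<length ts. \<Sum>j<length ts. cs ! i * cs ! j * (c\<^sup>2 * C (ts ! i) (ts ! j)))
          * \<theta>\<^sup>2) / 2))"
    using centered_gaussian_process_char[OF assms ts, of "map ((*) c) cs"] len by simp
qed

lemma (in prob_space) centered_gaussian_process_sum:
  assumes "finite I"
    and gauss: "\<And>i. i \<in> I \<Longrightarrow> centered_gaussian_process M T (X i) (C i)"
    and indep: "indep_vars (\<lambda>_. Pi\<^sub>M UNIV (\<lambda>_. borel)) (\<lambda>i \<omega>. \<lambda>t. X i t \<omega>) I"
  shows "centered_gaussian_process M T (\<lambda>t \<omega>. \<Sum>i\<in>I. X i t \<omega>) (\<lambda>x y. \<Sum>i\<in>I. C i x y)"
  unfolding centered_gaussian_process_def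
proof (intro conjI ballI allI impI)
  show "(\<lambda>\<omega>. \<Sum>i\<in>I. X i t \<omega>) \<in> borel_measurable M" if "t \<in> T" for t
    using centered_gaussian_process_measurable[OF gauss that] by measurable
  fix ts cs :: "real list" and \<theta> :: real
  assume ts: "set ts \<subseteq> T" and len: "length cs = length ts"
  define n where "n = length ts"
  define Z where "Z i \<omega> = (\<Sum>k<n. cs ! k * X i (ts ! k) \<omega>)" for i \<omega>
  define Q where "Q i = (\<Sum>k<n. \<Sum>l<n. cs ! k * cs ! l * C i (ts ! k) (ts ! l))" for i
  have "indep_vars (\<lambda>_. borel) (\<lambda>i \<omega>. (\<lambda>f. \<Sum>k<n. cs ! k * f (ts ! k)) (\<lambda>t. X i t \<omega>)) I"
    by (rule indep_vars_compose2[OF indep]) measurable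
  then have indep_Z: "indep_vars (\<lambda>_. borel) Z I"
    unfolding Z_def .
  have char_Z: "char (distr M borel (Z i)) \<theta> = complex_of_real (exp (- (Q i * \<theta>\<^sup>2) / 2))" if "i \<in> I" for i
    unfolding Z_def Q_def n_def using centered_gaussian_process_char[OF gauss[OF that] ts len] .
  have "(\<lambda>\<omega>. \<Sum>k<n. cs ! k * (\<Sum>i\<in>I. X i (ts ! k) \<omega>)) = (\<lambda>\<omega>. \<Sum>i\<in>I. Z i \<omega>)"
    unfolding Z_def sum_distrib_left by (rule ext) (rule sum.swap)
  then have "char (distr M borel (\<lambda>\<omega>. \<Sum>k<n. cs ! k * (\<Sum>i\<in>I. X i (ts ! k) \<omega>))) \<theta>
      = (\<Prod>i\<in>I. char (distr M borel (Z i)) \<theta>)"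
    using char_distr_sum[OF indep_Z] by simp
  also have "\<dots> = complex_of_real (exp (\<Sum>i\<in>I. - (Q i * \<theta>\<^sup>2) / 2))"
    using \<open>finite I\<close> by (simp add: char_Z exp_sum of_real_prod)
  also have "(\<Sum>i\<in>I. - (Q i * \<theta>\<^sup>2) / 2) = - ((\<Sum>i\<in>I. Q i) * \<theta>\<^sup>2) / 2"
    by (simp add: sum_distrib_right sum_divide_distrib sum_negf)
  also have "(\<Sum>i\<in>I. Q i) = (\<Sum>k<n. \<Sum>l<n. cs ! k * cs ! l * (\<Sum>i\<in>I. C i (ts ! k) (ts ! l)))"
    unfolding Q_def sum_distrib_left sum.swap[of _ I "{..<n}"] by (intro sum.cong refl sum.swap)
  finally show "char (distr M borel (\<lambda>\<omega>. \<Sum>k<length ts. cs ! k * (\<Sum>i\<in>I. X i (ts ! k) \<omega>))) \<theta>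
      = complex_of_real (exp (- ((\<Sum>k<length ts. \<Sum>l<length ts. cs ! k * cs ! l * (\<Sum>i\<in>I. C i (ts ! k) (ts ! l)))
          * \<theta>\<^sup>2) / 2))"
    unfolding n_def .
qed

lemma centered_gaussian_process_sfbm:
  assumes "is_fbm M K B"
  shows "centered_gaussian_process M T (sfbm B) (sfbm_cov K)"
  unfolding centered_gaussian_process_def
proof (intro conjI ballI allI impI)
  have fbm: "centered_gaussian_process M UNIV B (fbm_cov K)"
    using assms unfolding is_fbm_def by blast
  show "sfbm B t \<in> borel_measurable M" for t
    using centered_gaussian_process_measurable[OF fbm] unfolding sfbm_def[abs_def] by measurable
  fix ts cs :: "real list" and \<theta> :: real
  assume len: "length cs = length ts"
  define n where "n = length ts"
  define ts2 where "ts2 = ts @ map uminus ts"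
  define cs2 where "cs2 = map (\<lambda>c. c / sqrt 2) (cs @ cs)"
  have len2: "length ts2 = n + n" "length cs2 = length ts2"
    using len by (simp_all add: ts2_def cs2_def n_def)
  have ts2: "ts2 ! k = ts ! k" "ts2 ! (n + k) = - (ts ! k)" if "k < n" for k
    using that by (simp_all add: ts2_def n_def nth_append)
  have cs2: "cs2 ! k = cs ! k / sqrt 2" "cs2 ! (n + k) = cs ! k / sqrt 2" if "k < n" for k
    using that len by (simp_all add: cs2_def n_def nth_append)
  have "(\<Sum>k<length ts2. cs2 ! k * B (ts2 ! k) \<omega>) = (\<Sum>k<n. cs ! k * sfbm B (ts ! k) \<omega>)" for \<omega>
    unfolding len2 sum_lessThan_add
    by (simp add: ts2 cs2 sfbm_def add_divide_distrib distrib_left flip: sum.distrib)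
  moreover have "(\<Sum>k<length ts2. \<Sum>l<length ts2. cs2 ! k * cs2 ! l * fbm_cov K (ts2 ! k) (ts2 ! l))
      = (\<Sum>k<n. \<Sum>l<n. cs ! k * cs ! l * sfbm_cov K (ts ! k) (ts ! l))"
  proof -
    have "cs ! k / sqrt 2 * (cs ! l / sqrt 2) = cs ! k * cs ! l / 2" for k l
      by (simp add: field_simps)
    then show ?thesis
      unfolding len2 sum_lessThan_add
      by (simp add: ts2 cs2 sfbm_cov_def add_divide_distrib distrib_left add.assoc flip: sum.distrib)
  qed
  ultimately show "char (distr M borel (\<lambda>\<omega>. \<Sum>k<length ts. cs ! k * sfbm B (ts ! k) \<omega>)) \<theta>
      = complex_of_real (exp (- ((\<Sum>k<length ts. \<Sum>l<length ts. cs ! k * cs ! l * sfbm_cov K (ts ! k) (ts ! l))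
          * \<theta>\<^sup>2) / 2))"
    using centered_gaussian_process_char[OF fbm _ len2(2), of \<theta>] by (simp add: n_def)
qed

lemma (in prob_space) centered_gaussian_process_msfbm:
  assumes fbm: "\<forall>i\<in>{1..N}. is_fbm M (H i) (B i)"
    and indep: "indep_vars (\<lambda>_. Pi\<^sub>M UNIV (\<lambda>_. borel)) (\<lambda>i \<omega>. \<lambda>t. B i t \<omega>) {1..N}"
  shows "centered_gaussian_process M T (msfbm N a B) (msfbm_cov N a H)"
proof -
  have "indep_vars (\<lambda>_. Pi\<^sub>M UNIV (\<lambda>_. borel))
      (\<lambda>i \<omega>. (\<lambda>f t. a i * ((f t + f (- t)) / sqrt 2)) (\<lambda>t. B i t \<omega>)) {1..N}"
    by (intro indep_vars_compose2[OF indep] measurable_PiM_single') auto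
  then have "indep_vars (\<lambda>_. Pi\<^sub>M UNIV (\<lambda>_. borel)) (\<lambda>i \<omega>. \<lambda>t. a i * sfbm (B i) t \<omega>) {1..N}"
    by (simp add: sfbm_def)
  moreover have "centered_gaussian_process M T (\<lambda>t \<omega>. a i * sfbm (B i) t \<omega>) (\<lambda>x y. (a i)\<^sup>2 * sfbm_cov (H i) x y)"
    if "i \<in> {1..N}" for i
    using fbm that by (intro centered_gaussian_process_scale centered_gaussian_process_sfbm) auto
  ultimately show ?thesis
    using centered_gaussian_process_sum[of "{1..N}" T "\<lambda>i t \<omega>. a i * sfbm (B i) t \<omega>"]
    unfolding msfbm_def[abs_def] msfbm_cov_def[abs_def] by auto
qed

section \<open>Independence from characteristic functions\<close>

lemma integral_scaleR_iexp:
  fixes h f :: "'a \<Rightarrow> real"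
  assumes "integrable M h" "f \<in> borel_measurable M"
  shows "(CLINT \<omega>|M. h \<omega> *\<^sub>R iexp (f \<omega>)) = Complex (\<integral>\<omega>. h \<omega> * cos (f \<omega>) \<partial>M) (\<integral>\<omega>. h \<omega> * sin (f \<omega>) \<partial>M)"
proof -
  have int: "integrable M (\<lambda>\<omega>. h \<omega> *\<^sub>R iexp (f \<omega>))"
    using assms by (intro Bochner_Integration.integrable_bound[OF assms(1)]) (auto simp: norm_exp_i_times)
  show ?thesis
    using integral_Re[OF int] integral_Im[OF int] by (simp add: complex_eq_iff Re_exp Im_exp)
qed

lemma real_distribution_distr_density:
  fixes g W :: "'a \<Rightarrow> real"
  assumes [measurable]: "g \<in> borel_measurable M" "W \<in> borel_measurable M"
    and "AE \<omega> in M. 0 \<le> g \<omega>" "integrable M g" "(\<integral>\<omega>. g \<omega> \<partial>M) = 1"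
  shows "real_distribution (distr (density M g) borel W)"
proof -
  have "emeasure (density M g) (space (density M g)) = 1"
    using assms by (simp add: emeasure_density nn_integral_eq_integral)
  then have "prob_space (density M g)"
    by (rule prob_spaceI)
  then show ?thesis
    unfolding real_distribution_def real_distribution_axioms_def
    by (auto intro: prob_space.prob_space_distr)
qed

lemma char_distr_density:
  fixes g W :: "'a \<Rightarrow> real"
  assumes [measurable]: "g \<in> borel_measurable M" "W \<in> borel_measurable M" and "AE \<omega> in M. 0 \<le> g \<omega>"
  shows "char (distr (density M g) borel W) \<phi> = (CLINT \<omega>|M. g \<omega> *\<^sub>R iexp (\<phi> * W \<omega>))"
  unfolding char_def using assms(3) by (simp add: integral_distr integral_density)

text \<open>Normalising \<open>f\<close> to a probability density, the law of \<open>W\<close> under \<open>f\<close> has the same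
  characteristic function as under \<open>M\<close>, so Levy's uniqueness theorem identifies the two laws.\<close>

lemma (in prob_space) integral_indicator_factor_if_char_factor_nonneg:
  fixes f W :: "'a \<Rightarrow> real"
  assumes [measurable]: "f \<in> borel_measurable M" "W \<in> borel_measurable M"
    and nonneg: "\<And>\<omega>. \<omega> \<in> space M \<Longrightarrow> 0 \<le> f \<omega>" and int_f: "integrable M f"
    and char: "\<And>\<phi>. (CLINT \<omega>|M. f \<omega> *\<^sub>R iexp (\<phi> * W \<omega>)) = (\<integral>\<omega>. f \<omega> \<partial>M) *\<^sub>R (CLINT \<omega>|M. iexp (\<phi> * W \<omega>))"
    and B: "B \<in> sets borel"
  shows "(\<integral>\<omega>. f \<omega> * indicator B (W \<omega>) \<partial>M) = (\<integral>\<omega>. f \<omega> \<partial>M) * (\<integral>\<omega>. indicator B (W \<omega>) \<partial>M)"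
proof (cases "(\<integral>\<omega>. f \<omega> \<partial>M) = 0")
  case True
  then have "AE \<omega> in M. f \<omega> = 0"
    using integral_nonneg_eq_0_iff_AE[OF int_f] nonneg by auto
  then have "(\<integral>\<omega>. f \<omega> * indicator B (W \<omega>) \<partial>M) = 0"
    by (intro integral_eq_zero_AE) auto
  with True show ?thesis by simp
next
  case False
  define m where "m = (\<integral>\<omega>. f \<omega> \<partial>M)"
  have "0 \<le> m"
    unfolding m_def using nonneg by (intro integral_nonneg_AE) auto
  with False have "0 < m" by (simp add: m_def)
  define g where "g \<omega> = f \<omega> / m" for \<omega>
  have [measurable]: "g \<in> borel_measurable M"
    unfolding g_def by measurable
  have g_nonneg: "AE \<omega> in M. 0 \<le> g \<omega>"
    using nonneg \<open>0 < m\<close> by (auto simp: g_def)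
  have int_g: "integrable M g" using int_f unfolding g_def[abs_def] by simp
  define D where "D = distr (density M g) borel W"
  have "(\<integral>\<omega>. g \<omega> \<partial>M) = 1"
    using \<open>0 < m\<close> by (simp add: g_def m_def)
  then have "real_distribution D"
    unfolding D_def using g_nonneg int_g by (intro real_distribution_distr_density) auto
  moreover have "char D = char (distr M borel W)"
  proof
    fix \<phi>
    have "char D \<phi> = (CLINT \<omega>|M. g \<omega> *\<^sub>R iexp (\<phi> * W \<omega>))"
      unfolding D_def by (rule char_distr_density[OF _ _ g_nonneg]) simp_all
    also have "\<dots> = inverse m *\<^sub>R (CLINT \<omega>|M. f \<omega> *\<^sub>R iexp (\<phi> * W \<omega>))"
      by (simp add: g_def divide_inverse mult.commute flip: integral_scaleR_right)
    also have "\<dots> = inverse m *\<^sub>R (m *\<^sub>R (CLINT \<omega>|M. iexp (\<phi> * W \<omega>)))"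
      by (simp only: char m_def)
    also have "\<dots> = char (distr M borel W) \<phi>"
      using \<open>0 < m\<close> by (simp add: char_def integral_distr)
    finally show "char D \<phi> = char (distr M borel W) \<phi>" .
  qed
  moreover have "real_distribution (distr M borel W)"
    by simp
  ultimately have "D = distr M borel W"
    using Levy_uniqueness by blast
  then have "(\<integral>x. indicator B x \<partial>D) = (\<integral>x. indicator B x \<partial>distr M borel W :: real)"
    by simp
  moreover have "(\<integral>x. indicator B x \<partial>D) = (\<integral>\<omega>. g \<omega> * indicator B (W \<omega>) \<partial>M)"
    unfolding D_def using B g_nonneg by (subst integral_distr) (auto simp: integral_density)
  moreover have "(\<integral>x. indicator B x \<partial>distr M borel W) = (\<integral>\<omega>. indicator B (W \<omega>) \<partial>M :: real)"
    using B by (subst integral_distr) auto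
  ultimately have "(\<integral>\<omega>. g \<omega> * indicator B (W \<omega>) \<partial>M) = (\<integral>\<omega>. indicator B (W \<omega>) \<partial>M)"
    by linarith
  then show ?thesis
    using \<open>0 < m\<close> by (simp add: g_def m_def field_simps)
qed

lemma (in prob_space) integral_iexp:
  fixes f :: "'a \<Rightarrow> real"
  assumes "f \<in> borel_measurable M"
  shows "(CLINT \<omega>|M. iexp (f \<omega>)) = Complex (\<integral>\<omega>. cos (f \<omega>) \<partial>M) (\<integral>\<omega>. sin (f \<omega>) \<partial>M)"
  using integral_scaleR_iexp[of M "\<lambda>_. 1" f] assms by simp

lemma (in prob_space) integral_indicator_factor_if_char_factor:
  fixes u W :: "'a \<Rightarrow> real"
  assumes [measurable]: "u \<in> borel_measurable M" "W \<in> borel_measurable M"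
    and bounded: "\<And>\<omega>. \<bar>u \<omega>\<bar> \<le> c"
    and char: "\<And>\<phi>. (CLINT \<omega>|M. u \<omega> *\<^sub>R iexp (\<phi> * W \<omega>)) = (\<integral>\<omega>. u \<omega> \<partial>M) *\<^sub>R (CLINT \<omega>|M. iexp (\<phi> * W \<omega>))"
    and B: "B \<in> sets borel"
  shows "(\<integral>\<omega>. u \<omega> * indicator B (W \<omega>) \<partial>M) = (\<integral>\<omega>. u \<omega> \<partial>M) * (\<integral>\<omega>. indicator B (W \<omega>) \<partial>M)"
proof -
  have int_u: "integrable M u"
    using bounded by (intro integrable_const_bound[where B = c]) auto
  have int_u_iexp: "integrable M (\<lambda>\<omega>. u \<omega> *\<^sub>R iexp (\<phi> * W \<omega>))" for \<phi>
    using bounded by (intro integrable_const_bound[where B = c]) (auto simp: norm_exp_i_times)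
  have int_ind: "integrable M (\<lambda>\<omega>. indicator B (W \<omega>) :: real)"
    using B by (intro integrable_const_bound[where B = 1]) auto
  have "(\<integral>\<omega>. (u \<omega> + c) * indicator B (W \<omega>) \<partial>M) = (\<integral>\<omega>. u \<omega> + c \<partial>M) * (\<integral>\<omega>. indicator B (W \<omega>) \<partial>M)"
  proof (rule integral_indicator_factor_if_char_factor_nonneg[OF _ _ _ _ _ B])
    show "0 \<le> u \<omega> + c" for \<omega>
      using bounded[of \<omega>] by linarith
    show "(CLINT \<omega>|M. (u \<omega> + c) *\<^sub>R iexp (\<phi> * W \<omega>)) = (\<integral>\<omega>. u \<omega> + c \<partial>M) *\<^sub>R (CLINT \<omega>|M. iexp (\<phi> * W \<omega>))" for \<phi>
    proof -
      have "integrable M (\<lambda>\<omega>. c *\<^sub>R iexp (\<phi> * W \<omega>))"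
        by (intro integrable_scaleR_right integrable_const_bound[where B = 1]) (auto simp: norm_exp_i_times)
      then show ?thesis
        using char[of \<phi>] int_u int_u_iexp[of \<phi>] by (simp add: scaleR_add_left integral_add prob_space)
    qed
  qed (use int_u in auto)
  moreover have "(\<integral>\<omega>. (u \<omega> + c) * indicator B (W \<omega>) \<partial>M)
      = (\<integral>\<omega>. u \<omega> * indicator B (W \<omega>) \<partial>M) + c * (\<integral>\<omega>. indicator B (W \<omega>) \<partial>M)"
  proof -
    have "integrable M (\<lambda>\<omega>. u \<omega> * indicator B (W \<omega>))"
      using B bounded order.trans[OF abs_ge_zero bounded]
      by (intro integrable_const_bound[where B = c]) (auto simp: indicator_def)
    then show ?thesis
      using int_ind by (simp add: distrib_right)
  qed
  ultimately show ?thesis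
    using int_u by (simp add: distrib_right prob_space)
qed

lemma (in prob_space) indep_var_if_integral_indicator_factor:
  fixes Y W :: "'a \<Rightarrow> real"
  assumes [measurable]: "Y \<in> borel_measurable M" "W \<in> borel_measurable M"
    and factor: "\<And>A B. A \<in> sets borel \<Longrightarrow> B \<in> sets borel \<Longrightarrow>
        (\<integral>\<omega>. indicator A (Y \<omega>) * indicator B (W \<omega>) \<partial>M)
        = (\<integral>\<omega>. indicator A (Y \<omega>) \<partial>M) * (\<integral>\<omega>. indicator B (W \<omega>) \<partial>M :: real)"
  shows "indep_var borel Y borel W"
proof -
  have sigma_vimage: "sigma_sets (space M) {X -` A \<inter> space M | A. A \<in> sets borel}
      = {X -` A \<inter> space M | A. A \<in> sets borel}" for X :: "'a \<Rightarrow> real"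
  proof -
    have "sigma_sets UNIV (sets borel) = sets (borel :: real measure)"
      using sets.sigma_sets_eq[of borel] by simp
    then show ?thesis
      using sigma_sets_vimage_commute[of X "space M" UNIV "sets borel"] by simp
  qed
  have prob_vimage: "prob (X -` A \<inter> space M) = (\<integral>\<omega>. indicator A (X \<omega>) \<partial>M)"
    if [measurable]: "X \<in> borel_measurable M" and "A \<in> sets borel" for X :: "'a \<Rightarrow> real" and A
  proof -
    have "prob (X -` A \<inter> space M) = (\<integral>\<omega>. indicator (X -` A \<inter> space M) \<omega> \<partial>M)"
      using that by simp
    also have "\<dots> = (\<integral>\<omega>. indicator A (X \<omega>) \<partial>M)"
      by (intro Bochner_Integration.integral_cong) (auto simp: indicator_def)
    finally show ?thesis .
  qed
  show ?thesis
    unfolding indep_var_eq sigma_vimage indep_sets2_eq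
  proof (intro conjI ballI)
    fix a b assume "a \<in> {Y -` A \<inter> space M | A. A \<in> sets borel}" "b \<in> {W -` A \<inter> space M | A. A \<in> sets borel}"
    then obtain A B where A: "A \<in> sets borel" "a = Y -` A \<inter> space M"
      and B: "B \<in> sets borel" "b = W -` B \<inter> space M"
      by auto
    have "prob (a \<inter> b) = (\<integral>\<omega>. indicator (a \<inter> b) \<omega> \<partial>M)"
      using A B by simp
    also have "\<dots> = (\<integral>\<omega>. indicator A (Y \<omega>) * indicator B (W \<omega>) \<partial>M)"
      by (intro Bochner_Integration.integral_cong) (auto simp: indicator_def A B)
    finally have "prob (a \<inter> b) = (\<integral>\<omega>. indicator A (Y \<omega>) * indicator B (W \<omega>) \<partial>M)" .
    then show "prob (a \<inter> b) = prob a * prob b"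
      using factor[OF A(1) B(1)] prob_vimage[of Y A] prob_vimage[of W B] A B by simp
  qed auto
qed

lemma cos_scaleR_iexp: "cos a *\<^sub>R iexp b = (iexp (a + b) + iexp (- a + b)) / 2"
  by (simp add: complex_eq_iff Re_exp Im_exp cos_add sin_add cos_diff sin_diff algebra_simps)

lemma sin_scaleR_iexp: "sin a *\<^sub>R iexp b = - \<i> * (iexp (a + b) - iexp (- a + b)) / 2"
  by (simp add: complex_eq_iff Re_exp Im_exp cos_add sin_add cos_diff sin_diff algebra_simps)

text \<open>\<open>cos\<close> and \<open>sin\<close> are averages of complex exponentials, so a factorisation of the joint
  characteristic function of \<open>(V, W)\<close> passes to them.\<close>

lemma (in prob_space)
  fixes V W :: "'a \<Rightarrow> real"
  assumes [measurable]: "V \<in> borel_measurable M" "W \<in> borel_measurable M"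
    and char: "\<And>\<alpha> \<beta>. (CLINT \<omega>|M. iexp (\<alpha> * V \<omega> + \<beta> * W \<omega>))
                    = (CLINT \<omega>|M. iexp (\<alpha> * V \<omega>)) * (CLINT \<omega>|M. iexp (\<beta> * W \<omega>))"
  shows integral_cos_scaleR_iexp_factor:
      "(CLINT \<omega>|M. cos (\<theta> * V \<omega>) *\<^sub>R iexp (\<phi> * W \<omega>))
        = (\<integral>\<omega>. cos (\<theta> * V \<omega>) \<partial>M) *\<^sub>R (CLINT \<omega>|M. iexp (\<phi> * W \<omega>))"
    and integral_sin_scaleR_iexp_factor:
      "(CLINT \<omega>|M. sin (\<theta> * V \<omega>) *\<^sub>R iexp (\<phi> * W \<omega>))
        = (\<integral>\<omega>. sin (\<theta> * V \<omega>) \<partial>M) *\<^sub>R (CLINT \<omega>|M. iexp (\<phi> * W \<omega>))"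
proof -
  define \<psi> where "\<psi> \<alpha> \<beta> = (CLINT \<omega>|M. iexp (\<alpha> * V \<omega> + \<beta> * W \<omega>))" for \<alpha> \<beta>
  have int_iexp: "integrable M (\<lambda>\<omega>. iexp (\<alpha> * V \<omega> + \<beta> * W \<omega>))" for \<alpha> \<beta>
    by (intro integrable_iexp) auto
  have \<psi>_factor: "\<psi> \<alpha> \<beta> = \<psi> \<alpha> 0 * \<psi> 0 \<beta>" for \<alpha> \<beta>
    using char by (simp add: \<psi>_def)
  have cos_avg: "(CLINT \<omega>|M. cos (\<theta> * V \<omega>) *\<^sub>R iexp (\<beta> * W \<omega>)) = (\<psi> \<theta> \<beta> + \<psi> (- \<theta>) \<beta>) / 2"
    and sin_avg: "(CLINT \<omega>|M. sin (\<theta> * V \<omega>) *\<^sub>R iexp (\<beta> * W \<omega>)) = - \<i> * (\<psi> \<theta> \<beta> - \<psi> (- \<theta>) \<beta>) / 2"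
    for \<beta>
    unfolding cos_scaleR_iexp sin_scaleR_iexp \<psi>_def
    using int_iexp[of \<theta> \<beta>] int_iexp[of "- \<theta>" \<beta>]
    by (simp_all add: integral_add integral_diff)
  have mean_cos: "(\<psi> \<theta> 0 + \<psi> (- \<theta>) 0) / 2 = complex_of_real (\<integral>\<omega>. cos (\<theta> * V \<omega>) \<partial>M)"
    and mean_sin: "- \<i> * (\<psi> \<theta> 0 - \<psi> (- \<theta>) 0) / 2 = complex_of_real (\<integral>\<omega>. sin (\<theta> * V \<omega>) \<partial>M)"
    using cos_avg[of 0] sin_avg[of 0] by (simp_all add: scaleR_conv_of_real)
  have "(CLINT \<omega>|M. iexp (\<phi> * W \<omega>)) = \<psi> 0 \<phi>"
    by (simp add: \<psi>_def)
  moreover have "(\<psi> \<theta> \<phi> + \<psi> (- \<theta>) \<phi>) / 2 = complex_of_real (\<integral>\<omega>. cos (\<theta> * V \<omega>) \<partial>M) * \<psi> 0 \<phi>"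
    and "- \<i> * (\<psi> \<theta> \<phi> - \<psi> (- \<theta>) \<phi>) / 2 = complex_of_real (\<integral>\<omega>. sin (\<theta> * V \<omega>) \<partial>M) * \<psi> 0 \<phi>"
    unfolding mean_cos[symmetric] mean_sin[symmetric]
    by (simp_all only: \<psi>_factor[of \<theta> \<phi>] \<psi>_factor[of "- \<theta>" \<phi>]) (simp_all add: algebra_simps)
  ultimately show "(CLINT \<omega>|M. cos (\<theta> * V \<omega>) *\<^sub>R iexp (\<phi> * W \<omega>))
      = (\<integral>\<omega>. cos (\<theta> * V \<omega>) \<partial>M) *\<^sub>R (CLINT \<omega>|M. iexp (\<phi> * W \<omega>))"
    and "(CLINT \<omega>|M. sin (\<theta> * V \<omega>) *\<^sub>R iexp (\<phi> * W \<omega>))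
      = (\<integral>\<omega>. sin (\<theta> * V \<omega>) \<partial>M) *\<^sub>R (CLINT \<omega>|M. iexp (\<phi> * W \<omega>))"
    unfolding cos_avg sin_avg by (simp_all only: scaleR_conv_of_real)
qed

lemma (in prob_space) indep_var_if_char_factor:
  fixes V W :: "'a \<Rightarrow> real"
  assumes [measurable]: "V \<in> borel_measurable M" "W \<in> borel_measurable M"
    and char: "\<And>\<alpha> \<beta>. (CLINT \<omega>|M. iexp (\<alpha> * V \<omega> + \<beta> * W \<omega>))
                    = (CLINT \<omega>|M. iexp (\<alpha> * V \<omega>)) * (CLINT \<omega>|M. iexp (\<beta> * W \<omega>))"
  shows "indep_var borel V borel W"
proof -
  note cos_factor = integral_cos_scaleR_iexp_factor[OF assms]
    and sin_factor = integral_sin_scaleR_iexp_factor[OF assms]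
  have cos_indicator: "(\<integral>\<omega>. cos (\<theta> * V \<omega>) * indicator B (W \<omega>) \<partial>M)
      = (\<integral>\<omega>. cos (\<theta> * V \<omega>) \<partial>M) * (\<integral>\<omega>. indicator B (W \<omega>) \<partial>M)"
    and sin_indicator: "(\<integral>\<omega>. sin (\<theta> * V \<omega>) * indicator B (W \<omega>) \<partial>M)
      = (\<integral>\<omega>. sin (\<theta> * V \<omega>) \<partial>M) * (\<integral>\<omega>. indicator B (W \<omega>) \<partial>M)"
    if "B \<in> sets borel" for \<theta> B
    using that cos_factor sin_factor by (intro integral_indicator_factor_if_char_factor[where c = 1]; simp)+
  have prob_indicator_factor: "(\<integral>\<omega>. indicator B (W \<omega>) * indicator A (V \<omega>) \<partial>M)
      = (\<integral>\<omega>. indicator B (W \<omega>) \<partial>M) * (\<integral>\<omega>. indicator A (V \<omega>) \<partial>M :: real)"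
    if A: "A \<in> sets borel" and B: "B \<in> sets borel" for A B
  proof (rule integral_indicator_factor_if_char_factor[OF _ _ _ _ A, where c = 1])
    fix \<theta>
    have "integrable M (\<lambda>\<omega>. indicator B (W \<omega>) :: real)"
      using B by (intro integrable_const_bound[where B = 1]) auto
    then have "(CLINT \<omega>|M. indicator B (W \<omega>) *\<^sub>R iexp (\<theta> * V \<omega>))
        = Complex (\<integral>\<omega>. indicator B (W \<omega>) * cos (\<theta> * V \<omega>) \<partial>M) (\<integral>\<omega>. indicator B (W \<omega>) * sin (\<theta> * V \<omega>) \<partial>M)"
      by (rule integral_scaleR_iexp) simp
    moreover have "(CLINT \<omega>|M. iexp (\<theta> * V \<omega>)) = Complex (\<integral>\<omega>. cos (\<theta> * V \<omega>) \<partial>M) (\<integral>\<omega>. sin (\<theta> * V \<omega>) \<partial>M)"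
      by (rule integral_iexp) simp
    ultimately show "(CLINT \<omega>|M. indicator B (W \<omega>) *\<^sub>R iexp (\<theta> * V \<omega>))
        = (\<integral>\<omega>. indicator B (W \<omega>) \<partial>M) *\<^sub>R (CLINT \<omega>|M. iexp (\<theta> * V \<omega>))"
      using cos_indicator[OF B, of \<theta>] sin_indicator[OF B, of \<theta>]
      by (simp add: mult.commute scaleR_complex.ctr)
  qed (use B in auto)
  show ?thesis
  proof (rule indep_var_if_integral_indicator_factor)
    fix A B :: "real set" assume "A \<in> sets borel" "B \<in> sets borel"
    then show "(\<integral>\<omega>. indicator A (V \<omega>) * indicator B (W \<omega>) \<partial>M)
        = (\<integral>\<omega>. indicator A (V \<omega>) \<partial>M) * (\<integral>\<omega>. indicator B (W \<omega>) \<partial>M :: real)"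
      using prob_indicator_factor[of A B] by (simp add: mult.commute)
  qed simp_all
qed

section \<open>Conditional expectations and the Markov property\<close>

lemma sets_gen_sigma: "sets (gen_sigma M V) = {V -` C \<inter> space M | C. C \<in> sets borel}"
proof -
  have "gen_sigma M V = vimage_algebra (space M) V borel"
    unfolding gen_sigma_def vimage_algebra_def ..
  then show ?thesis
    using sets_vimage_algebra2[of V "space M" borel] by simp
qed

lemma space_gen_sigma: "space (gen_sigma M V) = space M"
  unfolding gen_sigma_def by (rule space_measure_of) auto

lemma subalgebra_gen_sigma:
  "V \<in> borel_measurable M \<Longrightarrow> subalgebra M (gen_sigma M V)"
  unfolding subalgebra_def by (auto simp: sets_gen_sigma space_gen_sigma)

lemma
  assumes "\<And>u. u \<in> T \<Longrightarrow> X u \<in> borel_measurable M"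
  shows subalgebra_natural_filtration: "subalgebra M (natural_filtration M T X s)"
    and measurable_natural_filtration:
      "u \<in> T \<Longrightarrow> u \<le> s \<Longrightarrow> X u \<in> borel_measurable (natural_filtration M T X s)"
proof -
  define G where "G = {X u -` A \<inter> space M | u A. u \<in> T \<and> u \<le> s \<and> A \<in> sets borel}"
  have "G \<subseteq> Pow (space M)"
    by (auto simp: G_def)
  then have sets: "sets (natural_filtration M T X s) = sigma_sets (space M) G"
    and space: "space (natural_filtration M T X s) = space M"
    unfolding natural_filtration_def G_def[symmetric] by (simp_all add: sets_measure_of space_measure_of)
  have "G \<subseteq> sets M"
    using assms by (auto simp: G_def)
  then show "subalgebra M (natural_filtration M T X s)"
    unfolding subalgebra_def sets space using sets.sigma_sets_subset by blast
  show "X u \<in> borel_measurable (natural_filtration M T X s)" if "u \<in> T" "u \<le> s"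
  proof (rule measurableI)
    fix A :: "real set" assume "A \<in> sets borel"
    then have "X u -` A \<inter> space M \<in> G"
      using that by (auto simp: G_def)
    then show "X u -` A \<inter> space (natural_filtration M T X s) \<in> sets (natural_filtration M T X s)"
      unfolding sets space by auto
  qed auto
qed

lemma (in prob_space) sigma_finite_subalgebra_if_subalgebra:
  "subalgebra M F \<Longrightarrow> sigma_finite_subalgebra M F"
  by (auto simp: finite_measure_axioms finite_measure_subalgebra_def finite_measure_subalgebra_axioms_def
           intro!: finite_measure_subalgebra_is_sigma_finite)

lemma (in prob_space) real_cond_exp_indicator_indep:
  fixes V W :: "'a \<Rightarrow> real"
  assumes indep: "indep_var borel V borel W" and B: "B \<in> sets borel"
  shows "AE \<omega> in M. real_cond_exp M (gen_sigma M V) (\<lambda>\<omega>. indicator B (W \<omega>)) \<omega> = (\<integral>\<omega>. indicator B (W \<omega>) \<partial>M)"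
proof -
  have [measurable]: "V \<in> borel_measurable M" "W \<in> borel_measurable M"
    using indep_var_rv1[OF indep] indep_var_rv2[OF indep] by auto
  define g where "g \<omega> = (indicator B (W \<omega>) :: real)" for \<omega>
  have int_g: "integrable M g"
    unfolding g_def using B by (intro integrable_const_bound[where B = 1]) auto
  have "AE \<omega> in M. real_cond_exp M (gen_sigma M V) g \<omega> = (\<integral>\<omega>. g \<omega> \<partial>M)"
  proof (rule sigma_finite_subalgebra.real_cond_exp_charact)
    show "sigma_finite_subalgebra M (gen_sigma M V)"
      by (intro sigma_finite_subalgebra_if_subalgebra subalgebra_gen_sigma) simp
    fix S assume "S \<in> sets (gen_sigma M V)"
    then obtain C where C: "C \<in> sets borel" and S: "S = V -` C \<inter> space M"
      by (auto simp: sets_gen_sigma)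
    have ind_S: "indicator S \<omega> = (indicator C (V \<omega>) :: real)" if "\<omega> \<in> space M" for \<omega>
      using that S by (auto simp: indicator_def)
    have "indep_var borel (indicator C \<circ> V) borel (indicator B \<circ> W)"
      using indep C B by (intro indep_var_compose) auto
    then have indep_CB: "(\<integral>\<omega>. indicator C (V \<omega>) * g \<omega> \<partial>M) = (\<integral>\<omega>. indicator C (V \<omega>) \<partial>M) * (\<integral>\<omega>. g \<omega> \<partial>M)"
      unfolding g_def comp_def using C B
      by (intro indep_var_lebesgue_integral) (auto intro!: integrable_const_bound[where B = 1])
    have "(\<integral>\<omega>\<in>S. g \<omega> \<partial>M) = (\<integral>\<omega>. indicator C (V \<omega>) * g \<omega> \<partial>M)"
      unfolding set_lebesgue_integral_def by (rule Bochner_Integration.integral_cong) (simp_all add: ind_S)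
    also have "\<dots> = (\<integral>\<omega>. indicator C (V \<omega>) * (\<integral>\<omega>. g \<omega> \<partial>M) \<partial>M)"
      unfolding indep_CB by simp
    also have "\<dots> = (\<integral>\<omega>\<in>S. (\<integral>\<omega>. g \<omega> \<partial>M) \<partial>M)"
      unfolding set_lebesgue_integral_def by (rule Bochner_Integration.integral_cong) (simp_all add: ind_S)
    finally show "(\<integral>\<omega>\<in>S. g \<omega> \<partial>M) = (\<integral>\<omega>\<in>S. (\<integral>\<omega>. g \<omega> \<partial>M) \<partial>M)" .
  qed (simp_all add: space_gen_sigma int_g)
  then show ?thesis
    by (simp add: g_def[abs_def])
qed

lemma (in prob_space) indep_var_if_cond_exp_eq:
  fixes V W Y :: "'a \<Rightarrow> real"
  assumes subalg: "subalgebra M F"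
    and [measurable]: "V \<in> borel_measurable M" "Y \<in> borel_measurable M"
    and W_F: "W \<in> borel_measurable F"
    and indep: "indep_var borel V borel W"
    and cond_exp: "\<And>A. A \<in> sets borel \<Longrightarrow> AE \<omega> in M. real_cond_exp M F (\<lambda>\<omega>. indicator A (Y \<omega>)) \<omega>
                                          = real_cond_exp M (gen_sigma M V) (\<lambda>\<omega>. indicator A (Y \<omega>)) \<omega>"
  shows "indep_var borel Y borel W"
proof -
  have [measurable]: "W \<in> borel_measurable M"
    using subalg W_F by (rule measurable_from_subalg)
  define G where "G = gen_sigma M V"
  have sf_F: "sigma_finite_subalgebra M F" and sf_G: "sigma_finite_subalgebra M G"
    using subalg subalgebra_gen_sigma[of V M]
    by (simp_all add: G_def sigma_finite_subalgebra_if_subalgebra)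
  show ?thesis
  proof (rule indep_var_if_integral_indicator_factor)
    fix A B :: "real set" assume A: "A \<in> sets borel" and B: "B \<in> sets borel"
    define f where "f \<omega> = (indicator A (Y \<omega>) :: real)" for \<omega>
    define g where "g \<omega> = (indicator B (W \<omega>) :: real)" for \<omega>
    have [measurable]: "f \<in> borel_measurable M" "g \<in> borel_measurable M"
      unfolding f_def g_def using A B by measurable
    have g_F: "g \<in> borel_measurable F"
      unfolding g_def using B W_F by measurable
    have int_f: "integrable M f" and int_gf: "integrable M (\<lambda>\<omega>. g \<omega> * f \<omega>)"
      unfolding f_def g_def using A B
      by (auto intro!: integrable_const_bound[where B = 1] split: split_indicator)
    have g_bounded: "\<bar>g \<omega>\<bar> \<le> 1" for \<omega>
      by (simp add: g_def)
    have cond_exp_g: "AE \<omega> in M. real_cond_exp M G g \<omega> = (\<integral>\<omega>. g \<omega> \<partial>M)"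
      unfolding G_def g_def[abs_def] using real_cond_exp_indicator_indep[OF indep B] by simp
    \<comment> \<open>Condition on the past, replace the past by the present, and use that \<open>g\<close> is
      independent of the present.\<close>
    have "(\<integral>\<omega>. g \<omega> * f \<omega> \<partial>M) = (\<integral>\<omega>. g \<omega> * real_cond_exp M F f \<omega> \<partial>M)"
      using int_gf g_F by (intro sigma_finite_subalgebra.real_cond_exp_intg(2)[OF sf_F, symmetric]) auto
    also have "\<dots> = (\<integral>\<omega>. g \<omega> * real_cond_exp M G f \<omega> \<partial>M)"
      using cond_exp[OF A] by (intro integral_cong_AE) (auto simp: f_def[abs_def] G_def)
    also have "\<dots> = (\<integral>\<omega>. real_cond_exp M G f \<omega> * real_cond_exp M G g \<omega> \<partial>M)"
    proof -
      have "integrable M (real_cond_exp M G f)"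
        using sigma_finite_subalgebra.real_cond_exp_int(1)[OF sf_G int_f] .
      then have "integrable M (\<lambda>\<omega>. real_cond_exp M G f \<omega> * g \<omega>)"
        by (rule Bochner_Integration.integrable_bound) (auto simp: abs_mult g_bounded intro!: mult_left_le)
      then have "(\<integral>\<omega>. real_cond_exp M G f \<omega> * g \<omega> \<partial>M) = (\<integral>\<omega>. real_cond_exp M G f \<omega> * real_cond_exp M G g \<omega> \<partial>M)"
        by (rule sigma_finite_subalgebra.real_cond_exp_intg(2)[OF sf_G, symmetric]) auto
      then show ?thesis
        by (simp add: mult.commute)
    qed
    also have "\<dots> = (\<integral>\<omega>. real_cond_exp M G f \<omega> * (\<integral>\<omega>. g \<omega> \<partial>M) \<partial>M)"
      using cond_exp_g by (intro integral_cong_AE) auto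
    also have "\<dots> = (\<integral>\<omega>. f \<omega> \<partial>M) * (\<integral>\<omega>. g \<omega> \<partial>M)"
      using sigma_finite_subalgebra.real_cond_exp_int(2)[OF sf_G int_f] by simp
    finally show "(\<integral>\<omega>. indicator A (Y \<omega>) * indicator B (W \<omega>) \<partial>M)
        = (\<integral>\<omega>. indicator A (Y \<omega>) \<partial>M) * (\<integral>\<omega>. indicator B (W \<omega>) \<partial>M :: real)"
      by (simp add: f_def g_def mult.commute)
  qed simp_all
qed

section \<open>Markov centered Gaussian processes\<close>

lemma (in prob_space) centered_gaussian_process_iexp3:
  assumes gauss: "centered_gaussian_process M T X C" and T: "r \<in> T" "s \<in> T" "t \<in> T"
    and sym: "\<And>x y. x \<in> T \<Longrightarrow> y \<in> T \<Longrightarrow> C x y = C y x"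
  shows "(CLINT \<omega>|M. iexp (\<alpha> * X r \<omega> + \<beta> * X s \<omega> + \<gamma> * X t \<omega>))
    = exp (- (\<alpha>\<^sup>2 * C r r + \<beta>\<^sup>2 * C s s + \<gamma>\<^sup>2 * C t t
              + 2 * \<alpha> * \<beta> * C r s + 2 * \<alpha> * \<gamma> * C r t + 2 * \<beta> * \<gamma> * C s t) / 2)"
proof -
  have [measurable]: "X r \<in> borel_measurable M" "X s \<in> borel_measurable M" "X t \<in> borel_measurable M"
    using centered_gaussian_process_measurable[OF gauss] T by auto
  have "char (distr M borel (\<lambda>\<omega>. \<Sum>i<length [r, s, t]. [\<alpha>, \<beta>, \<gamma>] ! i * X ([r, s, t] ! i) \<omega>)) 1
      = exp (- ((\<Sum>i<length [r, s, t]. \<Sum>j<length [r, s, t].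
                   [\<alpha>, \<beta>, \<gamma>] ! i * [\<alpha>, \<beta>, \<gamma>] ! j * C ([r, s, t] ! i) ([r, s, t] ! j)) * 1\<^sup>2) / 2)"
    using centered_gaussian_process_char[OF gauss, of "[r, s, t]" "[\<alpha>, \<beta>, \<gamma>]" 1] T by simp
  then show ?thesis
    using sym[of s r] sym[of t r] sym[of t s] T
    by (simp add: char_def integral_distr numeral_3_eq_3 power2_eq_square algebra_simps)
qed

lemma (in prob_space) centered_gaussian_indep_residual:
  assumes gauss: "centered_gaussian_process M T X C" and T: "r \<in> T" "s \<in> T"
    and sym: "\<And>x y. x \<in> T \<Longrightarrow> y \<in> T \<Longrightarrow> C x y = C y x" and "C s s \<noteq> 0"
  shows "indep_var borel (X s) borel (\<lambda>\<omega>. X r \<omega> - C r s / C s s * X s \<omega>)"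
proof (rule indep_var_if_char_factor)
  define d where "d = C r s / C s s"
  define q where "q \<alpha> \<beta> = \<alpha>\<^sup>2 * C r r + \<beta>\<^sup>2 * C s s + 2 * \<alpha> * \<beta> * C r s" for \<alpha> \<beta>
  have [measurable]: "X r \<in> borel_measurable M" "X s \<in> borel_measurable M"
    using centered_gaussian_process_measurable[OF gauss] T by auto
  then show "X s \<in> borel_measurable M" "(\<lambda>\<omega>. X r \<omega> - d * X s \<omega>) \<in> borel_measurable M"
    by measurable
  have iexp2: "(CLINT \<omega>|M. iexp (\<alpha> * X s \<omega> + \<beta> * (X r \<omega> - d * X s \<omega>))) = exp (- q \<beta> (\<alpha> - \<beta> * d) / 2)"
    for \<alpha> \<beta>
  proof -
    have "(CLINT \<omega>|M. iexp (\<beta> * X r \<omega> + (\<alpha> - \<beta> * d) * X s \<omega> + 0 * X s \<omega>)) = exp (- q \<beta> (\<alpha> - \<beta> * d) / 2)"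
      using centered_gaussian_process_iexp3[OF gauss T(1,2,2) sym, of \<beta> "\<alpha> - \<beta> * d" 0] by (simp add: q_def)
    then show ?thesis
      by (simp add: algebra_simps)
  qed
  fix \<alpha> \<beta>
  have "q \<beta> (\<alpha> - \<beta> * d) = q 0 \<alpha> + q \<beta> (- \<beta> * d)"
    using \<open>C s s \<noteq> 0\<close> by (simp add: q_def d_def power2_eq_square field_simps)
  then show "(CLINT \<omega>|M. iexp (\<alpha> * X s \<omega> + \<beta> * (X r \<omega> - d * X s \<omega>)))
      = (CLINT \<omega>|M. iexp (\<alpha> * X s \<omega>)) * (CLINT \<omega>|M. iexp (\<beta> * (X r \<omega> - d * X s \<omega>)))"
    using iexp2[of \<alpha> \<beta>] iexp2[of \<alpha> 0] iexp2[of 0 \<beta>]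
    by (simp add: diff_divide_distrib flip: exp_add of_real_mult)
qed

lemma (in prob_space) centered_gaussian_cov_eq_if_indep:
  assumes gauss: "centered_gaussian_process M T X C" and T: "r \<in> T" "s \<in> T" "t \<in> T"
    and sym: "\<And>x y. x \<in> T \<Longrightarrow> y \<in> T \<Longrightarrow> C x y = C y x"
    and indep: "indep_var borel (X t) borel (\<lambda>\<omega>. X r \<omega> - d * X s \<omega>)"
  shows "C t r = d * C t s"
proof -
  define W where "W \<omega> = X r \<omega> - d * X s \<omega>" for \<omega>
  define q where "q \<alpha> \<beta> \<gamma> = \<alpha>\<^sup>2 * C r r + \<beta>\<^sup>2 * C s s + \<gamma>\<^sup>2 * C t t
    + 2 * \<alpha> * \<beta> * C r s + 2 * \<alpha> * \<gamma> * C r t + 2 * \<beta> * \<gamma> * C s t" for \<alpha> \<beta> \<gamma>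
  have iexp3: "(CLINT \<omega>|M. iexp (\<alpha> * X r \<omega> + \<beta> * X s \<omega> + \<gamma> * X t \<omega>)) = exp (- q \<alpha> \<beta> \<gamma> / 2)"
    for \<alpha> \<beta> \<gamma>
    unfolding q_def using centered_gaussian_process_iexp3[OF gauss T sym] by simp
  have [measurable]: "X u \<in> borel_measurable M" if "u \<in> {r, s, t}" for u
    using centered_gaussian_process_measurable[OF gauss] that T by auto
  have "(CLINT \<omega>|M. iexp (X t \<omega> + W \<omega>)) = (CLINT \<omega>|M. iexp (X t \<omega>)) * (CLINT \<omega>|M. iexp (W \<omega>))"
    using char_distr_add[OF indep[folded W_def], of 1] by (simp add: char_def integral_distr W_def)
  moreover have "(CLINT \<omega>|M. iexp (X t \<omega> + W \<omega>)) = exp (- q 1 (- d) 1 / 2)"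
    and "(CLINT \<omega>|M. iexp (X t \<omega>)) = exp (- q 0 0 1 / 2)"
    and "(CLINT \<omega>|M. iexp (W \<omega>)) = exp (- q 1 (- d) 0 / 2)"
    unfolding iexp3[symmetric] W_def by (simp_all add: algebra_simps)
  ultimately have "complex_of_real (exp (- q 1 (- d) 1 / 2))
      = complex_of_real (exp (- q 0 0 1 / 2)) * complex_of_real (exp (- q 1 (- d) 0 / 2))"
    by argo
  then have "exp (- q 1 (- d) 1 / 2) = exp (- q 0 0 1 / 2 + - q 1 (- d) 0 / 2)"
    unfolding exp_add of_real_mult[symmetric] of_real_eq_iff .
  then have "q 1 (- d) 1 = q 0 0 1 + q 1 (- d) 0"
    unfolding exp_inj_iff by linarith
  then show ?thesis
    using sym[of t r] sym[of t s] T by (simp add: q_def algebra_simps)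
qed

lemma (in prob_space) markov_centered_gaussian_cov:
  assumes gauss: "centered_gaussian_process M T X C"
    and sym: "\<And>x y. x \<in> T \<Longrightarrow> y \<in> T \<Longrightarrow> C x y = C y x"
    and markov: "markov_process M T X"
    and T: "r \<in> T" "s \<in> T" "t \<in> T" and "r \<le> s" "s \<le> t" and "C s s \<noteq> 0"
  shows "C t r * C s s = C r s * C t s"
proof -
  define W where "W \<omega> = X r \<omega> - C r s / C s s * X s \<omega>" for \<omega>
  have X_meas: "X u \<in> borel_measurable M" if "u \<in> T" for u
    using centered_gaussian_process_measurable[OF gauss that] .
  have [measurable]: "X u \<in> borel_measurable (natural_filtration M T X s)" if "u \<in> {r, s}" for u
    using measurable_natural_filtration[OF X_meas] that T \<open>r \<le> s\<close> by auto
  have "indep_var borel (X t) borel W"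
  proof (rule indep_var_if_cond_exp_eq)
    show "subalgebra M (natural_filtration M T X s)"
      using X_meas by (rule subalgebra_natural_filtration)
    show "W \<in> borel_measurable (natural_filtration M T X s)"
      unfolding W_def by measurable
    show "indep_var borel (X s) borel W"
      unfolding W_def using gauss T(1,2) sym \<open>C s s \<noteq> 0\<close> by (rule centered_gaussian_indep_residual)
  qed (use X_meas T markov[unfolded markov_process_def] \<open>s \<le> t\<close> in auto)
  then have "C t r = C r s / C s s * C t s"
    using centered_gaussian_cov_eq_if_indep[OF gauss T sym] unfolding W_def by blast
  then show ?thesis
    using \<open>C s s \<noteq> 0\<close> by (simp add: field_simps)
qed

theorem lemma4:
  fixes M :: "'a measure" and N :: nat and a H :: "nat \<Rightarrow> real"
    and B :: "nat \<Rightarrow> real \<Rightarrow> 'a \<Rightarrow> real"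
  assumes "prob_space M"
    and "N \<ge> 1"
    and "\<forall>i\<in>{1..N}. 0 < H i \<and> H i < 1"
    and "\<exists>i\<in>{1..N}. a i \<noteq> 0"
    and "\<exists>j\<in>{1..N}. a j \<noteq> 0 \<and> H j \<noteq> 1/2"
    and "\<forall>i\<in>{1..N}. is_fbm M (H i) (B i)"
    and "prob_space.indep_vars M (\<lambda>_. Pi\<^sub>M UNIV (\<lambda>_. borel)) (\<lambda>i \<omega>. \<lambda>t. B i t \<omega>) {1..N}"
  shows "\<not> markov_process M {0..} (msfbm N a B)"
proof
  assume markov: "markov_process M {0..} (msfbm N a B)"
  interpret prob_space M by fact
  obtain r s t where rst: "0 < r" "r < s" "s < t" "msfbm_cov N a H s s \<noteq> 0"
    and not_triangle: "msfbm_cov N a H t r * msfbm_cov N a H s s \<noteq> msfbm_cov N a H r s * msfbm_cov N a H t s"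
    using msfbm_cov_not_triangle[OF assms(3,5)] by blast
  have "centered_gaussian_process M {0..} (msfbm N a B) (msfbm_cov N a H)"
    using assms(6,7) by (rule centered_gaussian_process_msfbm)
  then have "msfbm_cov N a H t r * msfbm_cov N a H s s = msfbm_cov N a H r s * msfbm_cov N a H t s"
    using rst by (intro markov_centered_gaussian_cov[OF _ _ markov]) (auto simp: msfbm_cov_sym)
  with not_triangle show False ..
qed

end
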